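(* Let $\kappa$ be a regular uncountable cardinal with $\kappa^{<\kappa}=\kappa$ and $\gamma^\omega<\kappa$ for all $\gamma<\kappa$. There is a $\kappa$-representation $\langle I^0_\alpha\mid\alpha<\kappa\rangle$ of $I^0$ such that for every limit ordinal $\delta<\kappa$ and every $\nu\in I^0$ there is $\beta<\delta$ satisfying: for every $\sigma\in I^0_\delta$ with $\sigma>\nu$ there is $\sigma'\in I^0_\beta$ with $\sigma\ge\sigma'\ge\nu$.
   Context: Let $\mathbb Q$ be the rationals and order $\kappa\times\mathbb Q$ lexicographically. $I^0$ is the set of functions $f:\omega\to\kappa\times\mathbb Q$, written $f(n)=(f_1(n),f_2(n))$, such that $\{n<\omega\mid f_1(n)\ne0\}$ is finite, ordered by $f<g$ iff $f(n)<g(n)$ for the least $n$ with $f(n)\ne g(n)$. A $\kappa$-representation of a set $A$ of size $\le\kappa$ is an increasing continuous sequence of subsets of $A$, each of size $<\kappa$, whose union is $A$. *)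

theory Defs
  imports Main "HOL-Library.Cardinality" Complex_Main
begin

text \<open>The cardinal kappa is represented by a type 'k carrying a cardinal well-order
  r (card_order r, so Field r = UNIV). Ordinals below kappa are the elements of 'k,
  ordered by r.\<close>

definition kless :: "'k rel \<Rightarrow> 'k \<Rightarrow> 'k \<Rightarrow> bool" where
  "kless r a b \<longleftrightarrow> (a, b) \<in> r \<and> a \<noteq> b"

definition kzero :: "'k rel \<Rightarrow> 'k \<Rightarrow> bool" where
  "kzero r a \<longleftrightarrow> (\<forall>b. (a, b) \<in> r)"

definition klimit :: "'k rel \<Rightarrow> 'k \<Rightarrow> bool" where
  "klimit r d \<longleftrightarrow> (\<exists>a. kless r a d) \<and> (\<forall>a. kless r a d \<longrightarrow> (\<exists>b. kless r a b \<and> kless r b d))"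

definition kq_less :: "'k rel \<Rightarrow> 'k \<times> rat \<Rightarrow> 'k \<times> rat \<Rightarrow> bool" where
  "kq_less r x y \<longleftrightarrow> kless r (fst x) (fst y) \<or> (fst x = fst y \<and> snd x < snd y)"

definition I0 :: "'k rel \<Rightarrow> (nat \<Rightarrow> 'k \<times> rat) set" where
  "I0 r = {f. finite {n. \<not> kzero r (fst (f n))}}"

definition I0_less :: "'k rel \<Rightarrow> (nat \<Rightarrow> 'k \<times> rat) \<Rightarrow> (nat \<Rightarrow> 'k \<times> rat) \<Rightarrow> bool" where
  "I0_less r f g \<longleftrightarrow> (\<exists>n. f n \<noteq> g n \<and> (\<forall>m<n. f m = g m) \<and> kq_less r (f n) (g n))"

definition I0_le :: "'k rel \<Rightarrow> (nat \<Rightarrow> 'k \<times> rat) \<Rightarrow> (nat \<Rightarrow> 'k \<times> rat) \<Rightarrow> bool" where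
  "I0_le r f g \<longleftrightarrow> I0_less r f g \<or> f = g"

definition kappa_representation :: "'k rel \<Rightarrow> 'a set \<Rightarrow> ('k \<Rightarrow> 'a set) \<Rightarrow> bool" where
  "kappa_representation r A S \<longleftrightarrow>
     (\<forall>a. S a \<subseteq> A) \<and>
     (\<forall>a. ordLess2 (card_of (S a)) r) \<and>
     (\<forall>a b. (a, b) \<in> r \<longrightarrow> S a \<subseteq> S b) \<and>
     (\<forall>d. klimit r d \<longrightarrow> S d = (\<Union>a\<in>{a. kless r a d}. S a)) \<and>
     (\<Union>a. S a) = A"

end

(*
  Take for I^0_alpha the elements of I^0 all of whose first coordinates lie below alpha.
  As alpha x Q has size < kappa, |I^0_alpha| <= |alpha x Q|^omega < kappa.  An element of
  I^0 has finite support, so its first coordinates form a finite set; this gives continuity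
  at limits and that the I^0_alpha exhaust I^0.

  Given nu and a limit delta, let beta < delta bound the finitely many first coordinates of
  nu that lie below delta.  If sigma in I^0_delta exceeds nu and they first differ at n, then
  nu(0), ..., nu(n) have first coordinates below delta, hence below beta, and
  sigma' = nu(0), ..., nu(n-1), (nu_1(n), q), (0, 0), (0, 0), ...  with q rational chosen so
  that nu(n) < (nu_1(n), q) < sigma(n) lies in I^0_beta strictly between nu and sigma.
*)

theory Submission
  imports Defs "HOL-Library.Countable_Set_Type"
begin

unbundle cardinal_syntax

lemma card_of_Times_countable_ordLess:
  assumes r: "Card_order r" and uncountable: "|UNIV :: nat set| <o r"
    and A: "|A| <o r" and B: "countable B"
  shows "|A \<times> B| <o r"
proof (cases "finite A")
  case True
  then have "countable (A \<times> B)" using B by (simp add: countable_finite)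
  then have "|A \<times> B| \<le>o |UNIV :: nat set|" by (simp add: countable_card_of_nat)
  then show ?thesis using uncountable by (rule ordLeq_ordLess_trans)
next
  case infinite: False
  show ?thesis
  proof (cases "B = {}")
    case True
    then show ?thesis using ordLeq_ordLess_trans[OF card_of_empty A] by simp
  next
    case False
    have "|B| \<le>o |UNIV :: nat set|" using B by (simp add: countable_card_of_nat)
    moreover have "|UNIV :: nat set| \<le>o |A|" using infinite by (simp add: infinite_iff_card_of_nat)
    ultimately have "|B| \<le>o |A|" by (rule ordLeq_transitive)
    then have "|A \<times> B| =o |A|" using card_of_Times_infinite[OF infinite False] by blast
    then show ?thesis using A by (rule ordIso_ordLess_trans)
  qed
qed

lemma card_of_Func_nat_ordLess:
  fixes r :: "'k rel" and X :: "'a set"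
  assumes r: "card_order r"
    and omega_pow: "\<forall>A :: 'k set. |A| <o r \<longrightarrow> |Func (UNIV :: nat set) A| <o r"
    and X: "|X| <o r"
  shows "|Func (UNIV :: nat set) X| <o r"
proof -
  have "|X| \<le>o |UNIV :: 'k set|"
    using ordLess_imp_ordLeq[OF ordLess_ordIso_trans[OF X card_of_unique[OF r]]] .
  then obtain g :: "'a \<Rightarrow> 'k" where g: "inj_on g X" by (metis card_of_ordLeq)
  have gX: "|g ` X| <o r" using ordLeq_ordLess_trans[OF card_of_image X] .
  have "inj_on ((\<circ>) g) (Func UNIV X)"
    by (rule inj_onI) (auto simp: Func_def fun_eq_iff dest: inj_onD[OF g])
  moreover have "(\<circ>) g ` Func UNIV X \<subseteq> Func UNIV (g ` X)" by (auto simp: Func_def)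
  ultimately have "|Func (UNIV :: nat set) X| \<le>o |Func (UNIV :: nat set) (g ` X)|"
    by (metis card_of_ordLeq)
  then show ?thesis using omega_pow gX ordLeq_ordLess_trans by blast
qed

lemma kq_less_irrefl: "\<not> kq_less r x x"
  by (simp add: kq_less_def kless_def)

lemma kq_less_dense_snd:
  assumes "kq_less r x y"
  obtains q where "snd x < q" "kq_less r (fst x, q) y"
proof (cases "fst x = fst y")
  case True
  then have "snd x < snd y" using assms by (simp add: kq_less_def kless_def)
  then show ?thesis using True that[of "(snd x + snd y) / 2"] by (simp add: kq_less_def)
next
  case False
  then show ?thesis using assms that[of "snd x + 1"] by (simp add: kq_less_def)
qed

lemma I0_lessI:
  assumes "\<forall>m<n. f m = g m" and "kq_less r (f n) (g n)"
  shows "I0_less r f g"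
  using assms kq_less_irrefl unfolding I0_less_def by metis

lemma I0_less_interpolant:
  assumes z: "kzero r z" and agree: "\<forall>m<n. \<nu> m = \<sigma> m" and less: "kq_less r (\<nu> n) (\<sigma> n)"
  obtains \<sigma>' where "I0_less r \<nu> \<sigma>'" "I0_less r \<sigma>' \<sigma>" "\<sigma>' \<in> I0 r"
    "range (\<lambda>k. fst (\<sigma>' k)) \<subseteq> insert z ((\<lambda>m. fst (\<nu> m)) ` {..n})"
proof -
  obtain q where q: "snd (\<nu> n) < q" "kq_less r (fst (\<nu> n), q) (\<sigma> n)"
    using kq_less_dense_snd[OF less] by blast
  define \<sigma>' where "\<sigma>' k = (if k < n then \<nu> k else if k = n then (fst (\<nu> n), q) else (z, 0))" for k
  have "I0_less r \<nu> \<sigma>'"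
    by (rule I0_lessI[of n]) (use q in \<open>simp_all add: \<sigma>'_def kq_less_def\<close>)
  moreover have "I0_less r \<sigma>' \<sigma>"
    by (rule I0_lessI[of n]) (use q agree in \<open>simp_all add: \<sigma>'_def\<close>)
  moreover have "\<sigma>' \<in> I0 r"
  proof -
    have "{k. \<not> kzero r (fst (\<sigma>' k))} \<subseteq> {..n}"
      using z by (auto simp: \<sigma>'_def)
    then show ?thesis unfolding I0_def using finite_subset by blast
  qed
  moreover have "range (\<lambda>k. fst (\<sigma>' k)) \<subseteq> insert z ((\<lambda>m. fst (\<nu> m)) ` {..n})"
    by (auto simp: \<sigma>'_def)
  ultimately show ?thesis using that by blast
qed

definition I0_below :: "'k rel \<Rightarrow> 'k \<Rightarrow> (nat \<Rightarrow> 'k \<times> rat) set" where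
  "I0_below r \<alpha> = {f \<in> I0 r. \<forall>n. kless r (fst (f n)) \<alpha>}"

context
  fixes r :: "'k rel"
  assumes card: "card_order r"
begin

lemma card_order_linear_order: "refl r" "trans r" "antisym r" "total r"
  using card_order_on_well_order_on[OF card]
  by (auto simp: well_order_on_def linear_order_on_def partial_order_on_def preorder_on_def)

lemma kle_refl: "(a, a) \<in> r"
  using card_order_linear_order(1) by (simp add: refl_on_def)

lemma kle_total: "(a, b) \<in> r \<or> (b, a) \<in> r"
  using card_order_linear_order(4) kle_refl by (cases "a = b") (auto simp: total_on_def)

lemma kless_le_trans: "kless r a b \<Longrightarrow> (b, c) \<in> r \<Longrightarrow> kless r a c"
  using card_order_linear_order(2,3) unfolding kless_def trans_def antisym_def by blast

lemma le_kless_trans: "(a, b) \<in> r \<Longrightarrow> kless r b c \<Longrightarrow> kless r a c"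
  using card_order_linear_order(2,3) unfolding kless_def trans_def antisym_def by blast

lemma kless_trans: "kless r a b \<Longrightarrow> kless r b c \<Longrightarrow> kless r a c"
  using kless_le_trans[of a b c] by (simp add: kless_def)

lemma kq_less_fst_le: "kq_less r x y \<Longrightarrow> (fst x, fst y) \<in> r"
  using kle_refl by (auto simp: kq_less_def kless_def)

lemma kzero_exists: "\<exists>z. kzero r z"
proof -
  have UNIV: "UNIV = Field r" using card_order_on_Card_order[OF card] by blast
  have "wo_rel r" using card_order_on_well_order_on[OF card] by (simp add: wo_rel_def flip: UNIV)
  then have "(wo_rel.minim r UNIV, b) \<in> r" for b using wo_rel.minim_least[of r UNIV b] UNIV by simp
  then show ?thesis unfolding kzero_def by blast
qed

lemma kzero_unique: "kzero r z \<Longrightarrow> kzero r z' \<Longrightarrow> z = z'"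
  using card_order_linear_order(3) by (auto simp: kzero_def antisym_def)

lemma finite_has_kmax: "finite V \<Longrightarrow> V \<noteq> {} \<Longrightarrow> \<exists>m\<in>V. \<forall>v\<in>V. (v, m) \<in> r"
proof (induction V rule: finite_ne_induct)
  case (singleton x)
  then show ?case using kle_refl by blast
next
  case (insert x V)
  then obtain m where "m \<in> V" "\<forall>v\<in>V. (v, m) \<in> r" by blast
  then show ?case
    using kle_total[of x m] kle_refl card_order_linear_order(2) unfolding trans_def by blast
qed

lemma klimit_finite_bound:
  assumes d: "klimit r d" and "finite V" and V: "\<forall>v\<in>V. kless r v d"
  shows "\<exists>b. kless r b d \<and> (\<forall>v\<in>V. kless r v b)"
proof (cases "V = {}")
  case True
  then show ?thesis using d by (auto simp: klimit_def)
next
  case False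
  then obtain m where "m \<in> V" "\<forall>v\<in>V. (v, m) \<in> r" using finite_has_kmax \<open>finite V\<close> by blast
  moreover obtain b where "kless r m b" "kless r b d" using d V \<open>m \<in> V\<close> by (auto simp: klimit_def)
  ultimately show ?thesis using le_kless_trans by blast
qed

lemma I0_finite_first_coords:
  assumes "f \<in> I0 r"
  shows "finite (range (\<lambda>n. fst (f n)))"
proof -
  obtain z where z: "kzero r z" using kzero_exists by blast
  have "range (\<lambda>n. fst (f n)) \<subseteq> insert z ((\<lambda>n. fst (f n)) ` {n. \<not> kzero r (fst (f n))})"
    using kzero_unique[OF z] by blast
  then show ?thesis using assms finite_subset by (auto simp: I0_def)
qed

lemma I0_below_mono: "(a, b) \<in> r \<Longrightarrow> I0_below r a \<subseteq> I0_below r b"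
  using kless_le_trans by (auto simp: I0_below_def)

lemma I0_below_limit:
  assumes d: "klimit r d"
  shows "I0_below r d = (\<Union>a\<in>{a. kless r a d}. I0_below r a)"
proof
  show "I0_below r d \<subseteq> (\<Union>a\<in>{a. kless r a d}. I0_below r a)"
  proof
    fix f assume f: "f \<in> I0_below r d"
    then have "f \<in> I0 r" "\<forall>v\<in>range (\<lambda>n. fst (f n)). kless r v d" by (auto simp: I0_below_def)
    then obtain b where "kless r b d" "\<forall>v\<in>range (\<lambda>n. fst (f n)). kless r v b"
      using klimit_finite_bound[OF d I0_finite_first_coords] by blast
    then show "f \<in> (\<Union>a\<in>{a. kless r a d}. I0_below r a)" using f by (auto simp: I0_below_def)
  qed
  show "(\<Union>a\<in>{a. kless r a d}. I0_below r a) \<subseteq> I0_below r d"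
    using kless_trans by (auto simp: I0_below_def)
qed

lemma I0_below_limit_interpolation:
  assumes d: "klimit r d" and \<nu>: "\<nu> \<in> I0 r"
  shows "\<exists>b. kless r b d \<and>
    (\<forall>\<sigma>\<in>I0_below r d. I0_less r \<nu> \<sigma> \<longrightarrow> (\<exists>\<sigma>'\<in>I0_below r b. I0_less r \<nu> \<sigma>' \<and> I0_less r \<sigma>' \<sigma>))"
proof -
  obtain z where z: "kzero r z" using kzero_exists by blast
  define V where "V = {v \<in> range (\<lambda>n. fst (\<nu> n)). kless r v d}"
  have "finite V" unfolding V_def using I0_finite_first_coords[OF \<nu>] by simp
  then obtain b where b: "kless r b d" "\<forall>v\<in>V. kless r v b"
    using klimit_finite_bound[OF d] unfolding V_def by blast
  have "\<exists>\<sigma>'\<in>I0_below r b. I0_less r \<nu> \<sigma>' \<and> I0_less r \<sigma>' \<sigma>"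
    if \<sigma>: "\<sigma> \<in> I0_below r d" and "I0_less r \<nu> \<sigma>" for \<sigma>
  proof -
    obtain n where agree: "\<forall>m<n. \<nu> m = \<sigma> m" and less: "kq_less r (\<nu> n) (\<sigma> n)"
      using \<open>I0_less r \<nu> \<sigma>\<close> by (auto simp: I0_less_def)
    have "kless r (fst (\<nu> m)) d" if "m \<le> n" for m
      using \<sigma> agree le_kless_trans[OF kq_less_fst_le[OF less]] that
      by (cases "m = n") (auto simp: I0_below_def)
    then have \<nu>_below_b: "kless r (fst (\<nu> m)) b" if "m \<le> n" for m
      using b(2) that by (auto simp: V_def)
    have "kless r z b" using le_kless_trans[OF _ \<nu>_below_b] z by (auto simp: kzero_def)
    obtain \<sigma>' where "I0_less r \<nu> \<sigma>'" "I0_less r \<sigma>' \<sigma>" "\<sigma>' \<in> I0 r"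
      and coords: "range (\<lambda>k. fst (\<sigma>' k)) \<subseteq> insert z ((\<lambda>m. fst (\<nu> m)) ` {..n})"
      using I0_less_interpolant[OF z agree less] by blast
    moreover have "\<sigma>' \<in> I0_below r b"
      using \<open>\<sigma>' \<in> I0 r\<close> coords \<open>kless r z b\<close> \<nu>_below_b by (fastforce simp: I0_below_def)
    ultimately show ?thesis by blast
  qed
  then show ?thesis using b(1) by blast
qed

context
  assumes uncountable: "|UNIV :: nat set| <o r"
begin

lemma kless_finite_bound:
  assumes "finite V"
  shows "\<exists>b. \<forall>v\<in>V. kless r v b"
proof -
  have "|UNIV :: nat set| <o |UNIV :: 'k set|"
    using ordLess_ordIso_trans[OF uncountable card_of_unique[OF card]] .
  then have "\<not> finite (UNIV :: 'k set)"
    unfolding infinite_iff_card_of_nat by (rule ordLess_imp_ordLeq)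
  then have unbounded: "\<exists>b. kless r a b" for a
    using infinite_Card_order_limit[of r a] card_order_on_Card_order[OF card] by (auto simp: kless_def)
  show ?thesis
  proof (cases "V = {}")
    case False
    then obtain m where "\<forall>v\<in>V. (v, m) \<in> r" using finite_has_kmax assms by blast
    then show ?thesis using unbounded[of m] le_kless_trans by blast
  qed simp
qed

lemma UNION_I0_below: "(\<Union>a. I0_below r a) = I0 r"
proof
  show "I0 r \<subseteq> (\<Union>a. I0_below r a)"
  proof
    fix f assume "f \<in> I0 r"
    then obtain b where "\<forall>v\<in>range (\<lambda>n. fst (f n)). kless r v b"
      using kless_finite_bound I0_finite_first_coords by blast
    then show "f \<in> (\<Union>a. I0_below r a)" using \<open>f \<in> I0 r\<close> by (auto simp: I0_below_def)
  qed
qed (auto simp: I0_below_def)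

lemma card_of_I0_below:
  assumes omega_pow: "\<forall>A :: 'k set. |A| <o r \<longrightarrow> |Func (UNIV :: nat set) A| <o r"
  shows "|I0_below r \<alpha>| <o r"
proof -
  have Card: "Card_order r" and Field: "Field r = UNIV"
    using card_order_on_Card_order[OF card] by auto
  have "|underS r \<alpha>| <o r" using card_of_underS[OF Card] Field by simp
  then have "|underS r \<alpha> \<times> (UNIV :: rat set)| <o r"
    by (rule card_of_Times_countable_ordLess[OF Card uncountable]) simp
  then have "|Func (UNIV :: nat set) (underS r \<alpha> \<times> (UNIV :: rat set))| <o r"
    by (rule card_of_Func_nat_ordLess[OF card omega_pow])
  moreover have "I0_below r \<alpha> \<subseteq> Func UNIV (underS r \<alpha> \<times> UNIV)"
    by (auto simp: I0_below_def Func_def underS_def kless_def mem_Times_iff)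
  ultimately show ?thesis using ordLeq_ordLess_trans[OF card_of_mono1] by blast
qed

lemma kappa_representation_I0_below:
  assumes "\<forall>A :: 'k set. |A| <o r \<longrightarrow> |Func (UNIV :: nat set) A| <o r"
  shows "kappa_representation r (I0 r) (I0_below r)"
  unfolding kappa_representation_def
  using card_of_I0_below[OF assms] I0_below_mono I0_below_limit UNION_I0_below
  by (auto simp: I0_below_def)

end

end

theorem mainTheorem8:
  fixes r :: "'k rel"
  assumes card: "card_order r"
    and regular: "regularCard r"
    and uncountable: "ordLess2 (card_of (UNIV :: nat set)) r"
    and kappa_lt_kappa: "\<forall>A :: 'k set. ordLess2 (card_of A) r \<longrightarrow> ordLeq2 (card_of (Func A (UNIV :: 'k set))) r"
    and omega_pow: "\<forall>A :: 'k set. ordLess2 (card_of A) r \<longrightarrow> ordLess2 (card_of (Func (UNIV :: nat set) A)) r"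
  shows "\<exists>S. kappa_representation r (I0 r) S \<and>
     (\<forall>d \<nu>. klimit r d \<and> \<nu> \<in> I0 r \<longrightarrow>
        (\<exists>b. kless r b d \<and>
           (\<forall>\<sigma>\<in>S d. I0_less r \<nu> \<sigma> \<longrightarrow>
              (\<exists>\<sigma>'\<in>S b. I0_le r \<sigma>' \<sigma> \<and> I0_le r \<nu> \<sigma>'))))"
proof (rule exI[of _ "I0_below r"], intro conjI allI impI)
  show "kappa_representation r (I0 r) (I0_below r)"
    using kappa_representation_I0_below[OF card uncountable omega_pow] .
  fix d \<nu> assume "klimit r d \<and> \<nu> \<in> I0 r"
  then show "\<exists>b. kless r b d \<and> (\<forall>\<sigma>\<in>I0_below r d. I0_less r \<nu> \<sigma> \<longrightarrow>
      (\<exists>\<sigma>'\<in>I0_below r b. I0_le r \<sigma>' \<sigma> \<and> I0_le r \<nu> \<sigma>'))"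
    using I0_below_limit_interpolation[OF card] unfolding I0_le_def by blast
qed

end
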